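(* Let $\mathbf{V}\in\mathbb{R}^{n\times k}$ have orthonormal columns. Suppose $\mathbf{W}\in\mathbb{R}^{k\times k}$ satisfies $$\max_{i\in[n]}\Big\{\min_{l\in[k]}\|\mathbf{V}_{i,:}-\mathbf{W}_{l,:}\|\Big\}=\epsilon.$$ Then, provided $\epsilon<(3nk^2)^{-1}$, $$\min_{i,j\in[k],\,i\neq j}\|\mathbf{W}_{i,:}-\mathbf{W}_{j,:}\|\ge\sqrt{\frac{2}{n}}-\sqrt{12}\,k\,(3n\epsilon)^{1/4}.$$
   Context: $[n]=\{1,\dots,n\}$; $\|\cdot\|$ is the Euclidean norm; $\mathbf{V}_{i,:}$ denotes the $i$-th row of $\mathbf{V}$. *)

theory Defs
  imports "HOL-Analysis.Analysis"
begin

end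

theory Submission
  imports Defs
begin

text \<open>Fix two distinct rows \<open>W\<^sub>l\<close>, \<open>W\<^sub>m\<close>. The \<open>k - 1\<close> vectors \<open>W\<^sub>l + W\<^sub>m\<close> and \<open>W\<^sub>c\<close>
  (\<open>c \<noteq> l, m\<close>) do not span \<open>\<real>\<^sup>k\<close>, so some unit vector \<open>x\<close> is orthogonal to all of them;
  then \<open>|\<langle>W\<^sub>c, x\<rangle>| \<le> d/2\<close> for every row, where \<open>d = \<parallel>W\<^sub>l - W\<^sub>m\<parallel>\<close>. Each row of \<open>V\<close> is
  \<open>\<epsilon>\<close>-close to a row of \<open>W\<close>, so \<open>|\<langle>V\<^sub>i, x\<rangle>| \<le> d/2 + \<epsilon>\<close>, while orthonormality of the
  columns gives \<open>\<Sum>\<^sub>i \<langle>V\<^sub>i, x\<rangle>\<^sup>2 = 1\<close>. Hence \<open>1 \<le> n (d/2 + \<epsilon>)\<^sup>2\<close>, i.e.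
  \<open>d \<ge> 2/\<surd>n - 2\<epsilon>\<close>, which is stronger than the claimed bound.\<close>

lemma sum_row_inner_square_eq_norm_square:
  fixes V :: "real ^ 'k ^ 'n"
  assumes "transpose V ** V = mat 1"
  shows "(\<Sum>i\<in>UNIV. (V $ i \<bullet> x)\<^sup>2) = (norm x)\<^sup>2"
proof -
  have "(V *v x) \<bullet> (V *v x) = (x v* transpose V) \<bullet> (V *v x)"
    using transpose_matrix_vector[of "transpose V" x] by simp
  also have "\<dots> = x \<bullet> ((transpose V ** V) *v x)"
    by (simp only: dot_lmul_matrix matrix_vector_mul_assoc)
  also have "\<dots> = (norm x)\<^sup>2"
    using assms by (simp add: dot_square_norm)
  finally show ?thesis
    by (simp add: inner_vec_def matrix_vector_mul_component power2_eq_square)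
qed

lemma unit_vector_orthogonal_to_finite_set:
  fixes S :: "'a::euclidean_space set"
  assumes "finite S" and "card S < DIM('a)"
  obtains x where "norm x = 1" and "\<And>y. y \<in> S \<Longrightarrow> x \<bullet> y = 0"
proof -
  have "dim S < DIM('a)"
    using dim_le_card'[OF assms(1)] assms(2) by linarith
  then obtain x0 where "x0 \<noteq> 0" and "\<And>y. y \<in> span S \<Longrightarrow> orthogonal x0 y"
    using orthogonal_to_subspace_exists by blast
  then show thesis
    by (intro that[of "x0 /\<^sub>R norm x0"]) (auto simp: orthogonal_def span_base)
qed

lemma unit_vector_with_small_row_projections:
  fixes W :: "'a::euclidean_space ^ 'm"
  assumes "CARD('m) \<le> DIM('a)" and "l \<noteq> m"
  obtains x where "norm x = 1" and "\<And>c. \<bar>W $ c \<bullet> x\<bar> \<le> norm (W $ l - W $ m) / 2"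
proof -
  define f where "f c = (if c = l \<or> c = m then W $ l + W $ m else W $ c)" for c
  have range_f: "range f = f ` (UNIV - {m})"
    using \<open>l \<noteq> m\<close> by (auto simp: f_def image_iff)
  have "card (range f) \<le> card (UNIV - {m})"
    unfolding range_f by (rule card_image_le) simp
  also have "\<dots> < CARD('m)"
    by (simp add: card_Diff_singleton)
  finally have "card (range f) < DIM('a)"
    using assms(1) by linarith
  then obtain x where x: "norm x = 1" and orth_range: "\<And>y. y \<in> range f \<Longrightarrow> x \<bullet> y = 0"
    using unit_vector_orthogonal_to_finite_set[OF finite_imageI[OF finite]] by blast
  have orth: "x \<bullet> f c = 0" for c
    using orth_range by blast
  have lm: "x \<bullet> W $ l = - (x \<bullet> W $ m)"
    using orth[of l] by (simp add: f_def inner_add_right)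
  have "\<bar>x \<bullet> (W $ l - W $ m)\<bar> \<le> norm (W $ l - W $ m)"
    using Cauchy_Schwarz_ineq2[of x "W $ l - W $ m"] x by simp
  then have "\<bar>x \<bullet> W $ c\<bar> \<le> norm (W $ l - W $ m) / 2" if "c = l \<or> c = m" for c
    using that lm by (auto simp: inner_diff_right)
  moreover have "x \<bullet> W $ c = 0" if "c \<noteq> l" "c \<noteq> m" for c
    using orth[of c] that by (simp add: f_def)
  ultimately have "\<bar>W $ c \<bullet> x\<bar> \<le> norm (W $ l - W $ m) / 2" for c
    by (cases "c = l \<or> c = m") (simp_all add: inner_commute)
  with x show thesis by (rule that)
qed

lemma dist_rows_ge_of_rows_near:
  fixes V :: "real ^ 'k ^ 'n" and W :: "real ^ 'k ^ 'm"
  assumes orth: "transpose V ** V = mat 1"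
    and near: "\<And>i. \<exists>c. norm (V $ i - W $ c) \<le> \<epsilon>"
    and "CARD('m) \<le> CARD('k)" and "l \<noteq> m"
  shows "2 / sqrt (real CARD('n)) - 2 * \<epsilon> \<le> norm (W $ l - W $ m)"
proof -
  define d where "d = norm (W $ l - W $ m)"
  have "CARD('m) \<le> DIM(real ^ 'k)"
    using assms(3) by simp
  then obtain x where x: "norm x = 1" and small: "\<And>c. \<bar>W $ c \<bullet> x\<bar> \<le> d / 2"
    using unit_vector_with_small_row_projections[where W = W] \<open>l \<noteq> m\<close> unfolding d_def by blast
  have row_bound: "\<bar>V $ i \<bullet> x\<bar> \<le> d / 2 + \<epsilon>" for i
  proof -
    obtain c where c: "norm (V $ i - W $ c) \<le> \<epsilon>"
      using near by blast
    have "\<bar>(V $ i - W $ c) \<bullet> x\<bar> \<le> \<epsilon>"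
      using Cauchy_Schwarz_ineq2[of "V $ i - W $ c" x] x c by simp
    then show ?thesis
      using small[of c] by (simp add: inner_diff_left)
  qed
  have "1 = (\<Sum>i\<in>UNIV. (V $ i \<bullet> x)\<^sup>2)"
    using sum_row_inner_square_eq_norm_square[OF orth] x by simp
  also have "\<dots> \<le> (\<Sum>i\<in>(UNIV::'n set). (d / 2 + \<epsilon>)\<^sup>2)"
    by (intro sum_mono) (metis power2_abs abs_ge_zero power_mono row_bound)
  finally have "1 / real CARD('n) \<le> (d / 2 + \<epsilon>)\<^sup>2"
    by (simp add: divide_le_eq mult.commute)
  moreover have "0 \<le> d / 2 + \<epsilon>"
    using row_bound[of undefined] by linarith
  ultimately have "1 / sqrt (real CARD('n)) \<le> d / 2 + \<epsilon>"
    by (metis real_sqrt_abs real_sqrt_divide real_sqrt_le_mono real_sqrt_one abs_of_nonneg)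
  then show ?thesis
    by (simp add: d_def)
qed

lemma exists_le_of_Max_Min_range:
  fixes f :: "'a::finite \<Rightarrow> 'b::finite \<Rightarrow> 'c::linorder"
  assumes "Max (range (\<lambda>i. Min (range (f i)))) = e"
  shows "\<exists>c. f i c \<le> e"
proof -
  have "Min (range (f i)) \<in> range (f i)"
    by (rule Min_in) auto
  then obtain c where "Min (range (f i)) = f i c"
    by blast
  moreover have "Min (range (f i)) \<le> e"
    unfolding assms[symmetric] by (rule Max_ge) auto
  ultimately show ?thesis by auto
qed

lemma quartic_root_bound_le_linear_bound:
  fixes n k e :: real
  assumes "1 \<le> n" and "1 \<le> k" and "0 \<le> e" and "e < 1"
  shows "sqrt (2 / n) - sqrt 12 * k * (3 * n * e) powr (1/4) \<le> 2 / sqrt n - 2 * e"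
proof -
  have "sqrt 2 \<le> 2"
    by (rule real_le_lsqrt) auto
  then have "sqrt (2 / n) \<le> 2 / sqrt n"
    using assms(1) by (simp add: real_sqrt_divide divide_right_mono)
  moreover have "e \<le> (3 * n * e) powr (1/4)"
  proof (cases "e = 0")
    case False
    then have "e = e powr 1"
      using assms(3) by simp
    also have "\<dots> \<le> e powr (1/4)"
      using False assms(3,4) by (intro powr_mono') auto
    also have "\<dots> \<le> (3 * n * e) powr (1/4)"
      using assms(1,3) mult_right_mono[of 1 "3 * n" e] by (intro powr_mono2) auto
    finally show ?thesis .
  qed simp
  moreover have "2 \<le> sqrt 12 * k"
  proof -
    have "2 \<le> sqrt 12"
      by (rule real_le_rsqrt) simp
    also have "\<dots> \<le> sqrt 12 * k"
      using assms(2) by simp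
    finally show ?thesis .
  qed
  ultimately show ?thesis
    using assms(3) mult_mono[of 2 "sqrt 12 * k" e "(3 * n * e) powr (1/4)"] by simp
qed

theorem proposition5:
  fixes V :: "real ^ 'k ^ 'n" and W :: "real ^ 'k ^ 'k" and \<epsilon> :: real
  assumes orth: "transpose V ** V = mat 1"
    and eps: "Max (range (\<lambda>i. Min (range (\<lambda>l. norm (V $ i - W $ l))))) = \<epsilon>"
    and small: "\<epsilon> < 1 / (3 * real CARD('n) * real CARD('k) ^ 2)"
  shows "\<forall>i j. i \<noteq> j \<longrightarrow>
           norm (W $ i - W $ j) \<ge> sqrt (2 / real CARD('n))
             - sqrt 12 * real CARD('k) * (3 * real CARD('n) * \<epsilon>) powr (1/4)"
proof (intro allI impI)
  fix l m :: 'k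
  assume "l \<noteq> m"
  have near: "\<exists>c. norm (V $ i - W $ c) \<le> \<epsilon>" for i
    using exists_le_of_Max_Min_range[OF eps] .
  then have "0 \<le> \<epsilon>"
    by (meson norm_ge_zero order_trans)
  have "1 \<le> 3 * real CARD('n) * real CARD('k) ^ 2"
    by (simp add: Suc_leI one_le_power mult_ge1_I)
  then have "\<epsilon> < 1"
    using small by (smt (verit) divide_le_eq_1)
  have "sqrt (2 / real CARD('n)) - sqrt 12 * real CARD('k) * (3 * real CARD('n) * \<epsilon>) powr (1/4)
      \<le> 2 / sqrt (real CARD('n)) - 2 * \<epsilon>"
    using \<open>0 \<le> \<epsilon>\<close> \<open>\<epsilon> < 1\<close> by (intro quartic_root_bound_le_linear_bound) (simp_all add: Suc_leI)
  also have "\<dots> \<le> norm (W $ l - W $ m)"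
    using dist_rows_ge_of_rows_near[OF orth near _ \<open>l \<noteq> m\<close>] by simp
  finally show "norm (W $ l - W $ m) \<ge> sqrt (2 / real CARD('n))
      - sqrt 12 * real CARD('k) * (3 * real CARD('n) * \<epsilon>) powr (1/4)" .
qed

end
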